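(* In the setting described in the context, suppose conditions (E) and (M) hold. Then for any compact set $A\subset\Omega$ with $|A|>0$ and any $\delta>0$, as $N\to\infty$, \[ \mathbb P_N\big[\max_AX\le(\gamma_*-\delta)\log\epsilon_N^{-1}\big]\to0. \]
   Context: $\Omega\subset\mathbb R^d$ is a bounded, simply connected open set with smooth boundary; $|\cdot|$ is Lebesgue measure; $\gamma_*=\sqrt{2d}$. For each $N$, $\mathbb P_N$ (expectation $\mathbb E_N$) is a probability measure under which the canonical process $X$ is a random function on $\Omega$ that is integrable, bounded above and upper semicontinuous (so it attains its maximum on compact sets), and which approximates a Gaussian log-correlated field on $\Omega$ in the sense that for each $f\in C_c^\infty(\Omega)$ the law of $\int fX$ converges to that of the Gaussian field with covariance $\log|x-y|^{-1}+g(x,y)$, $g$ continuous, bounded above, $L^2$. For $\gamma>0$ let $\mu_N^\gamma(dx)=\frac{e^{\gamma X(x)}}{\mathbb E_N[e^{\gamma X(x)}]}dx$. Condition (E): there is a sequence $\epsilon_N>0$, $\epsilon_N\to0$, such that for every $\gamma>0$ there is $R_\gamma>0$ with $\mathbb E_N[e^{\gamma X(x)}]\le R_\gamma\epsilon_N^{-\gamma^2/2}$ for all $x\in\Omega$, $N$, and for every compact $A\subset\Omega$ there is $C_{\gamma,A}>0$ with $\mathbb E_N[e^{\gamma X(x)}]\ge C_{\gamma,A}^{-1}\epsilon_N^{-\gamma^2/2}$ for all $x\in A$. Condition (M): for any $\gamma<\gamma_*$ and any fixed Borel set $A\subseteq\Omega$ with $|A|>0$, $\mu_N^\gamma(A)$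 under $\mathbb P_N$ converges in distribution as $N\to\infty$ to a random variable $\zeta_A^\gamma$ with $\mathbb P[0<\zeta_A^\gamma<\infty]=1$. *)

theory Defs
  imports "HOL-Analysis.Analysis" "HOL-Probability.Probability"
begin

fun Ck_on :: "nat \<Rightarrow> 'a::euclidean_space set \<Rightarrow> ('a \<Rightarrow> real) \<Rightarrow> bool" where
  "Ck_on 0 S f = continuous_on S f"
| "Ck_on (Suc k) S f = (continuous_on S f \<and> f differentiable_on S \<and>
      (\<forall>v. Ck_on k S (\<lambda>x. frechet_derivative f (at x) v)))"

definition smooth_on :: "'a::euclidean_space set \<Rightarrow> ('a \<Rightarrow> real) \<Rightarrow> bool" where
  "smooth_on S f \<longleftrightarrow> (\<forall>k. Ck_on k S f)"

definition test_function :: "'a::euclidean_space set \<Rightarrow> ('a \<Rightarrow> real) \<Rightarrow> bool" where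
  "test_function \<Omega> f \<longleftrightarrow> smooth_on UNIV f \<and> compact (closure {x. f x \<noteq> 0})
      \<and> closure {x. f x \<noteq> 0} \<subseteq> \<Omega>"

definition smooth_boundary :: "'a::euclidean_space set \<Rightarrow> bool" where
  "smooth_boundary \<Omega> \<longleftrightarrow> (\<forall>p\<in>frontier \<Omega>. \<exists>r>0. \<exists>\<phi>. smooth_on UNIV \<phi> \<and>
      frechet_derivative \<phi> (at p) \<noteq> (\<lambda>v. 0) \<and>
      \<Omega> \<inter> ball p r = {x\<in>ball p r. \<phi> x < 0})"

definition usc_on :: "'a::topological_space set \<Rightarrow> ('a \<Rightarrow> real) \<Rightarrow> bool" where
  "usc_on S h \<longleftrightarrow> (\<forall>x\<in>S. \<forall>t>h x. \<forall>\<^sub>F y in at x within S. h y < t)"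

definition gaussian_law :: "real \<Rightarrow> real measure" where
  "gaussian_law s = (if s = 0 then return borel 0 else density lborel (normal_density 0 (sqrt s)))"

definition gamma_star :: "'a::euclidean_space itself \<Rightarrow> real" where
  "gamma_star _ = sqrt (2 * real DIM('a))"

definition expmom :: "'w measure \<Rightarrow> ('w \<Rightarrow> 'a \<Rightarrow> real) \<Rightarrow> real \<Rightarrow> 'a \<Rightarrow> real" where
  "expmom P X \<gamma> x = (\<integral>\<omega>. exp (\<gamma> * X \<omega> x) \<partial>P)"

definition gmc :: "'w measure \<Rightarrow> ('w \<Rightarrow> 'a::euclidean_space \<Rightarrow> real) \<Rightarrow> real \<Rightarrow> 'a set \<Rightarrow> 'w \<Rightarrow> real" where
  "gmc P X \<gamma> A \<omega> = (LBINT x:A. exp (\<gamma> * X \<omega> x) / expmom P X \<gamma> x)"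

end

theory Submission
  imports Defs
begin

(* Pick gamma' < gamma < gamma_* with a := gamma_* - delta < (gamma + gamma') / 2. On the event
   max_A X <= t := a log(1/eps), the estimate exp(gamma X) <= exp((gamma - gamma') t) exp(gamma' X)
   and the lower bound of (E) for E exp(gamma X) give mu^gamma(A) <= C eps^(gamma^2/2 - (gamma - gamma') a)
   times the integral of exp(gamma' X) over A, whose expectation is O(eps^(-gamma'^2/2)) by Fubini and the
   upper bound of (E). By Markov's inequality the event has probability at most
   P[mu^gamma(A) <= eta] + O(eps^kappa / eta) with kappa = (gamma - gamma')((gamma + gamma')/2 - a) > 0,
   and by (M) the first term is eventually close to P[zeta <= eta], which is small for small eta because
   zeta > 0 almost surely.
   Since X is only upper semicontinuous in x, Fubini is applied to a jointly measurable function
   agreeing with X on Omega. *)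

lemma usc_on_le_on_cball_around:
  fixes h :: "'a::metric_space \<Rightarrow> real"
  assumes "open \<Omega>" "usc_on \<Omega> h" "x \<in> \<Omega>" "h x < t"
    and dense: "\<And>U. open U \<Longrightarrow> U \<noteq> {} \<Longrightarrow> \<exists>q\<in>D. q \<in> U"
  obtains q r where "q \<in> D" "r \<in> \<rat>" "0 < r" "x \<in> cball q r" "cball q r \<subseteq> \<Omega>"
    "\<And>z. z \<in> cball q r \<Longrightarrow> h z \<le> t"
proof -
  have "\<forall>\<^sub>F z in at x within \<Omega>. h z < t"
    using assms(2-4) by (auto simp: usc_on_def)
  then obtain d where "0 < d" and d: "\<And>z. z \<in> \<Omega> \<Longrightarrow> z \<noteq> x \<Longrightarrow> dist z x < d \<Longrightarrow> h z < t"
    by (auto simp: eventually_at)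
  obtain e where "0 < e" "ball x e \<subseteq> \<Omega>"
    using assms(1,3) open_contains_ball by blast
  define e' where "e' = min d e"
  have "0 < e'" using \<open>0 < d\<close> \<open>0 < e\<close> by (simp add: e'_def)
  then obtain r where r: "r \<in> \<rat>" "0 < r" "r < e' / 2"
    using Rats_dense_in_real[of 0 "e' / 2"] by auto
  obtain q where q: "q \<in> D" "q \<in> ball x r"
    using dense[of "ball x r"] r by auto
  have near: "dist z x < e'" if "z \<in> cball q r" for z
    using that q r dist_triangle[of z x q] by (simp add: dist_commute)
  then have "cball q r \<subseteq> \<Omega>"
    using \<open>ball x e \<subseteq> \<Omega>\<close> by (force simp: e'_def dist_commute)
  moreover have "h z \<le> t" if "z \<in> cball q r" for z
    using d[of z] near[OF that] \<open>cball q r \<subseteq> \<Omega>\<close> that \<open>h x < t\<close>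
    by (cases "z = x") (auto simp: e'_def)
  moreover have "x \<in> cball q r" using q by (simp add: dist_commute)
  ultimately show ?thesis using that q r by blast
qed

(* Y (\<omega>, x) is the infimum, over the rational closed balls in \<Omega> containing x, of the supremum of
   X \<omega> on the ball; each such supremum is measurable in \<omega> by max_meas. *)
lemma usc_field_extends_to_jointly_measurable:
  fixes X :: "'w \<Rightarrow> 'a::euclidean_space \<Rightarrow> real"
  assumes "open \<Omega>"
    and bdd: "\<And>\<omega>. bdd_above (X \<omega> ` \<Omega>)"
    and usc: "\<And>\<omega>. usc_on \<Omega> (X \<omega>)"
    and max_meas: "\<And>K t. compact K \<Longrightarrow> K \<subseteq> \<Omega> \<Longrightarrow> {\<omega> \<in> space M. \<forall>x\<in>K. X \<omega> x \<le> t} \<in> sets M"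
  obtains Y where "(\<lambda>(\<omega>, x). Y \<omega> x) \<in> borel_measurable (M \<Otimes>\<^sub>M lborel)"
    and "\<And>\<omega> x. x \<in> \<Omega> \<Longrightarrow> Y \<omega> x = X \<omega> x"
proof -
  obtain D :: "'a set" where "countable D" and dense: "\<And>U. open U \<Longrightarrow> U \<noteq> {} \<Longrightarrow> \<exists>q\<in>D. q \<in> U"
    by (rule countable_dense_setE) blast
  define I where "I = {(q, r). q \<in> D \<and> r \<in> \<rat> \<and> 0 < r \<and> cball q r \<subseteq> \<Omega>}"
  have "countable I"
    by (rule countable_subset[of _ "D \<times> \<rat>"]) (use \<open>countable D\<close> countable_rat in \<open>auto simp: I_def\<close>)
  have bdd_cball: "bdd_above (X \<omega> ` cball q r)" if "(q, r) \<in> I" for \<omega> q r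
    using that by (intro bdd_above_mono[OF bdd[of \<omega>]] image_mono) (auto simp: I_def)
  define S where "S q r \<omega> = (SUP z\<in>cball q r. X \<omega> z)" for q r \<omega>
  have S_meas: "S q r \<in> borel_measurable M" if "(q, r) \<in> I" for q r
    unfolding borel_measurable_iff_le
  proof
    fix t
    have "{\<omega> \<in> space M. S q r \<omega> \<le> t} = {\<omega> \<in> space M. \<forall>x\<in>cball q r. X \<omega> x \<le> t}"
      using that bdd_cball[OF that] by (auto simp: S_def I_def cSUP_le_iff)
    then show "{\<omega> \<in> space M. S q r \<omega> \<le> t} \<in> sets M"
      using max_meas[of "cball q r" t] that by (auto simp: I_def)
  qed
  define F where "F i p = (if snd p \<in> cball (fst i) (snd i) then ereal (S (fst i) (snd i) (fst p)) else \<infinity>)"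
    for i p
  define \<Phi> where "\<Phi> p = real_of_ereal (INF i\<in>I. F i p)" for p
  have "\<Phi> \<in> borel_measurable (M \<Otimes>\<^sub>M lborel)"
  proof -
    have "F i \<in> borel_measurable (M \<Otimes>\<^sub>M lborel)" if "i \<in> I" for i
    proof -
      have [measurable]: "S (fst i) (snd i) \<in> borel_measurable M" using S_meas that by auto
      have [measurable]: "cball (fst i) (snd i) \<in> sets borel" by (simp add: borel_closed)
      show ?thesis unfolding F_def by measurable
    qed
    then show ?thesis
      unfolding \<Phi>_def by (intro borel_measurable_real_of_ereal borel_measurable_INF \<open>countable I\<close>)
  qed
  moreover have "\<Phi> (\<omega>, x) = X \<omega> x" if "x \<in> \<Omega>" for \<omega> x
  proof -
    have "(INF i\<in>I. F i (\<omega>, x)) = ereal (X \<omega> x)"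
    proof (rule antisym)
      show "ereal (X \<omega> x) \<le> (INF i\<in>I. F i (\<omega>, x))"
      proof (rule INF_greatest)
        fix i assume "i \<in> I"
        then show "ereal (X \<omega> x) \<le> F i (\<omega>, x)"
          using bdd_cball[of "fst i" "snd i"] by (auto simp: F_def S_def intro!: cSUP_upper)
      qed
      show "(INF i\<in>I. F i (\<omega>, x)) \<le> ereal (X \<omega> x)"
      proof (rule dense_ge)
        fix y assume "ereal (X \<omega> x) < y"
        then obtain t where "X \<omega> x < t" "ereal t < y"
          using ereal_dense2 by fastforce
        then obtain q r where "q \<in> D" "r \<in> \<rat>" "0 < r" "x \<in> cball q r" "cball q r \<subseteq> \<Omega>"
          and le: "\<And>z. z \<in> cball q r \<Longrightarrow> X \<omega> z \<le> t"
          using usc_on_le_on_cball_around[OF \<open>open \<Omega>\<close> usc \<open>x \<in> \<Omega>\<close> _ dense] by metis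
        then have "(q, r) \<in> I" by (simp add: I_def)
        moreover have "F (q, r) (\<omega>, x) \<le> ereal t"
          using le \<open>x \<in> cball q r\<close> by (auto simp: F_def S_def intro!: cSUP_least)
        ultimately show "(INF i\<in>I. F i (\<omega>, x)) \<le> y"
          using \<open>ereal t < y\<close> by (meson INF_lower order_trans less_imp_le)
      qed
    qed
    then show ?thesis by (simp add: \<Phi>_def)
  qed
  ultimately show ?thesis
    using that[of "\<lambda>\<omega> x. \<Phi> (\<omega>, x)"] by simp
qed

lemma expmom_borel_measurable:
  fixes Y :: "'w \<Rightarrow> 'a::euclidean_space \<Rightarrow> real"
  assumes "sigma_finite_measure M"
    and [measurable]: "(\<lambda>(\<omega>, x). Y \<omega> x) \<in> borel_measurable (M \<Otimes>\<^sub>M lborel)"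
  shows "expmom M Y \<gamma> \<in> borel_measurable lborel"
proof -
  have "(\<lambda>(x, \<omega>). exp (\<gamma> * Y \<omega> x)) \<in> borel_measurable (lborel \<Otimes>\<^sub>M M)"
    by measurable
  then show ?thesis
    unfolding expmom_def[abs_def]
    by (rule sigma_finite_measure.borel_measurable_lebesgue_integral[OF assms(1)])
qed

lemma gmc_borel_measurable:
  fixes Y :: "'w \<Rightarrow> 'a::euclidean_space \<Rightarrow> real"
  assumes "sigma_finite_measure M"
    and [measurable]: "(\<lambda>(\<omega>, x). Y \<omega> x) \<in> borel_measurable (M \<Otimes>\<^sub>M lborel)"
    and [measurable]: "A \<in> sets borel"
  shows "gmc M Y \<gamma> A \<in> borel_measurable M"
proof -
  have [measurable]: "expmom M Y \<gamma> \<in> borel_measurable borel"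
    using expmom_borel_measurable[OF assms(1,2)] by simp
  have "(\<lambda>(\<omega>, x). indicator A x *\<^sub>R (exp (\<gamma> * Y \<omega> x) / expmom M Y \<gamma> x))
      \<in> borel_measurable (M \<Otimes>\<^sub>M lborel)"
    by measurable
  then show ?thesis
    unfolding gmc_def[abs_def] set_lebesgue_integral_def
    by (rule lborel.borel_measurable_lebesgue_integral)
qed

lemma nn_integral_set_exp_field_le:
  fixes Y :: "'w \<Rightarrow> 'a::euclidean_space \<Rightarrow> real"
  assumes "sigma_finite_measure M"
    and [measurable]: "(\<lambda>(\<omega>, x). Y \<omega> x) \<in> borel_measurable (M \<Otimes>\<^sub>M lborel)"
    and [measurable]: "A \<in> sets borel"
    and int: "\<And>x. x \<in> A \<Longrightarrow> integrable M (\<lambda>\<omega>. exp (\<gamma> * Y \<omega> x))"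
    and le: "\<And>x. x \<in> A \<Longrightarrow> expmom M Y \<gamma> x \<le> B"
  shows "(\<integral>\<^sup>+\<omega>. (\<integral>\<^sup>+x\<in>A. ennreal (exp (\<gamma> * Y \<omega> x)) \<partial>lborel) \<partial>M) \<le> ennreal B * emeasure lborel A"
proof -
  interpret pair_sigma_finite M lborel
    unfolding pair_sigma_finite_def using assms(1) sigma_finite_lborel by simp
  have "(\<lambda>(\<omega>, x). ennreal (exp (\<gamma> * Y \<omega> x)) * indicator A x) \<in> borel_measurable (M \<Otimes>\<^sub>M lborel)"
    by measurable
  from Fubini[OF this]
  have "(\<integral>\<^sup>+\<omega>. (\<integral>\<^sup>+x\<in>A. ennreal (exp (\<gamma> * Y \<omega> x)) \<partial>lborel) \<partial>M)
      = (\<integral>\<^sup>+x. (\<integral>\<^sup>+\<omega>. ennreal (exp (\<gamma> * Y \<omega> x)) * indicator A x \<partial>M) \<partial>lborel)"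
    by simp
  also have "\<dots> \<le> (\<integral>\<^sup>+x. ennreal B * indicator A x \<partial>lborel)"
  proof (rule nn_integral_mono)
    fix x
    show "(\<integral>\<^sup>+\<omega>. ennreal (exp (\<gamma> * Y \<omega> x)) * indicator A x \<partial>M) \<le> ennreal B * indicator A x"
    proof (cases "x \<in> A")
      case True
      have "(\<integral>\<^sup>+\<omega>. ennreal (exp (\<gamma> * Y \<omega> x)) \<partial>M) = ennreal (expmom M Y \<gamma> x)"
        unfolding expmom_def by (rule nn_integral_eq_integral[OF int[OF True]]) auto
      with True le[OF True] show ?thesis by (simp add: ennreal_leI)
    qed simp
  qed
  also have "\<dots> = ennreal B * emeasure lborel A"
    by (rule nn_integral_cmult_indicator) simp
  finally show ?thesis .
qed

lemma gmc_le_by_smaller_exponent: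
  fixes Y :: "'w \<Rightarrow> 'a::euclidean_space \<Rightarrow> real"
  assumes [measurable]: "Y \<omega> \<in> borel_measurable lborel" "A \<in> sets borel"
    and "\<gamma>' \<le> \<gamma>" "0 < m" "0 \<le> r"
    and lower: "\<And>x. x \<in> A \<Longrightarrow> m \<le> expmom M Y \<gamma> x"
    and below: "\<And>x. x \<in> A \<Longrightarrow> Y \<omega> x \<le> t"
    and small: "ennreal (exp ((\<gamma> - \<gamma>') * t) / m) * (\<integral>\<^sup>+x\<in>A. ennreal (exp (\<gamma>' * Y \<omega> x)) \<partial>lborel)
      \<le> ennreal r"
  shows "gmc M Y \<gamma> A \<omega> \<le> r"
proof -
  define K where "K = exp ((\<gamma> - \<gamma>') * t) / m"
  have pointwise: "exp (\<gamma> * Y \<omega> x) / expmom M Y \<gamma> x \<le> K * exp (\<gamma>' * Y \<omega> x)" if "x \<in> A" for x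
  proof -
    have "exp (\<gamma> * Y \<omega> x) = exp ((\<gamma> - \<gamma>') * Y \<omega> x) * exp (\<gamma>' * Y \<omega> x)"
      by (simp flip: exp_add add: algebra_simps)
    also have "\<dots> \<le> exp ((\<gamma> - \<gamma>') * t) * exp (\<gamma>' * Y \<omega> x)"
      using below[OF that] \<open>\<gamma>' \<le> \<gamma>\<close> by (simp add: mult_left_mono)
    finally have "exp (\<gamma> * Y \<omega> x) / expmom M Y \<gamma> x \<le> exp ((\<gamma> - \<gamma>') * t) * exp (\<gamma>' * Y \<omega> x) / m"
      using lower[OF that] \<open>0 < m\<close> by (intro frac_le) auto
    then show ?thesis by (simp add: K_def)
  qed
  have "(\<integral>\<^sup>+x. ennreal (indicator A x *\<^sub>R (exp (\<gamma> * Y \<omega> x) / expmom M Y \<gamma> x)) \<partial>lborel)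
      \<le> (\<integral>\<^sup>+x. ennreal K * (ennreal (exp (\<gamma>' * Y \<omega> x)) * indicator A x) \<partial>lborel)"
  proof (rule nn_integral_mono)
    fix x
    show "ennreal (indicator A x *\<^sub>R (exp (\<gamma> * Y \<omega> x) / expmom M Y \<gamma> x))
        \<le> ennreal K * (ennreal (exp (\<gamma>' * Y \<omega> x)) * indicator A x)"
    proof (cases "x \<in> A")
      case True
      have "0 \<le> K" using \<open>0 < m\<close> by (simp add: K_def)
      with pointwise[OF True] show ?thesis
        using True by (simp add: ennreal_mult[symmetric] ennreal_leI)
    qed simp
  qed
  also have "\<dots> = ennreal K * (\<integral>\<^sup>+x\<in>A. ennreal (exp (\<gamma>' * Y \<omega> x)) \<partial>lborel)"
    by (rule nn_integral_cmult) measurable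
  finally show ?thesis
    unfolding gmc_def set_lebesgue_integral_def
    using small \<open>0 \<le> r\<close> by (intro integral_real_bounded) (auto simp: K_def)
qed

lemma measure_field_below_le_measure_gmc_le:
  fixes Y :: "'w \<Rightarrow> 'a::euclidean_space \<Rightarrow> real"
  assumes "prob_space M"
    and [measurable]: "(\<lambda>(\<omega>, x). Y \<omega> x) \<in> borel_measurable (M \<Otimes>\<^sub>M lborel)"
    and [measurable]: "A \<in> sets borel"
    and "emeasure lborel A < \<infinity>"
    and "\<gamma>' \<le> \<gamma>" "0 < m" "0 \<le> B" "0 < \<eta>"
    and lower: "\<And>x. x \<in> A \<Longrightarrow> m \<le> expmom M Y \<gamma> x"
    and int: "\<And>x. x \<in> A \<Longrightarrow> integrable M (\<lambda>\<omega>. exp (\<gamma>' * Y \<omega> x))"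
    and upper: "\<And>x. x \<in> A \<Longrightarrow> expmom M Y \<gamma>' x \<le> B"
  shows "measure M {\<omega> \<in> space M. \<forall>x\<in>A. Y \<omega> x \<le> t}
    \<le> measure M {\<omega> \<in> space M. gmc M Y \<gamma> A \<omega> \<le> \<eta>} + exp ((\<gamma> - \<gamma>') * t) / m * B * measure lborel A / \<eta>"
proof -
  interpret prob_space M by fact
  define K where "K = exp ((\<gamma> - \<gamma>') * t) / m"
  have "0 < K" using \<open>0 < m\<close> by (simp add: K_def)
  have A_finite: "emeasure lborel A = ennreal (measure lborel A)"
    using \<open>emeasure lborel A < \<infinity>\<close> by (intro emeasure_eq_ennreal_measure) simp
  define W where "W \<omega> = (\<integral>\<^sup>+x\<in>A. ennreal (exp (\<gamma>' * Y \<omega> x)) \<partial>lborel)" for \<omega>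
  have [measurable]: "W \<in> borel_measurable M"
    unfolding W_def by measurable
  have [measurable]: "gmc M Y \<gamma> A \<in> borel_measurable M"
    by (rule gmc_borel_measurable) (auto intro: prob_space_imp_sigma_finite \<open>prob_space M\<close>)
  define S where "S = {\<omega> \<in> space M. ennreal \<eta> \<le> ennreal K * W \<omega>}"
  have [measurable]: "S \<in> sets M" unfolding S_def by measurable
  have "{\<omega> \<in> space M. \<forall>x\<in>A. Y \<omega> x \<le> t} \<subseteq> {\<omega> \<in> space M. gmc M Y \<gamma> A \<omega> \<le> \<eta>} \<union> S"
  proof
    fix \<omega> assume \<omega>: "\<omega> \<in> {\<omega> \<in> space M. \<forall>x\<in>A. Y \<omega> x \<le> t}"
    show "\<omega> \<in> {\<omega> \<in> space M. gmc M Y \<gamma> A \<omega> \<le> \<eta>} \<union> S"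
    proof (cases "\<omega> \<in> S")
      case False
      then have "ennreal K * W \<omega> \<le> ennreal \<eta>" using \<omega> by (auto simp: S_def)
      moreover have "Y \<omega> \<in> borel_measurable lborel"
        using measurable_Pair2[OF assms(2), of \<omega>] \<omega> by simp
      ultimately have "gmc M Y \<gamma> A \<omega> \<le> \<eta>"
        using \<omega> \<open>0 < \<eta>\<close> by (intro gmc_le_by_smaller_exponent[OF _ _ \<open>\<gamma>' \<le> \<gamma>\<close> \<open>0 < m\<close>])
          (auto simp: K_def W_def lower)
      with \<omega> show ?thesis by simp
    qed simp
  qed
  then have "measure M {\<omega> \<in> space M. \<forall>x\<in>A. Y \<omega> x \<le> t}
      \<le> measure M {\<omega> \<in> space M. gmc M Y \<gamma> A \<omega> \<le> \<eta>} + measure M S"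
    by (intro order_trans[OF finite_measure_mono measure_Un_le]) auto
  moreover have "measure M S \<le> K * B * measure lborel A / \<eta>"
  proof -
    have "ennreal \<eta> * emeasure M S = (\<integral>\<^sup>+\<omega>. ennreal \<eta> * indicator S \<omega> \<partial>M)"
      by (simp add: nn_integral_cmult_indicator)
    also have "\<dots> \<le> (\<integral>\<^sup>+\<omega>. ennreal K * W \<omega> \<partial>M)"
      by (intro nn_integral_mono) (auto simp: S_def indicator_def)
    also have "\<dots> = ennreal K * (\<integral>\<^sup>+\<omega>. W \<omega> \<partial>M)"
      by (rule nn_integral_cmult) measurable
    also have "\<dots> \<le> ennreal K * (ennreal B * emeasure lborel A)"
      unfolding W_def
      by (intro mult_left_mono nn_integral_set_exp_field_le int upper)
        (auto intro: prob_space_imp_sigma_finite \<open>prob_space M\<close>)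
    also have "\<dots> = ennreal (K * B * measure lborel A)"
      using \<open>0 < K\<close> \<open>0 \<le> B\<close> by (simp add: A_finite ennreal_mult mult.assoc)
    finally have "\<eta> * measure M S \<le> K * B * measure lborel A"
      using \<open>0 < \<eta>\<close> \<open>0 < K\<close> \<open>0 \<le> B\<close>
      by (simp add: emeasure_eq_measure ennreal_mult[symmetric] ennreal_le_iff)
    then show ?thesis
      using \<open>0 < \<eta>\<close> by (simp add: pos_le_divide_eq mult.commute)
  qed
  ultimately show ?thesis
    unfolding K_def by linarith
qed

lemma gmc_cong:
  assumes "A \<in> sets borel" "\<And>\<omega> x. x \<in> A \<Longrightarrow> Y \<omega> x = X \<omega> x"
  shows "gmc M Y \<gamma> A = gmc M X \<gamma> A"
  unfolding gmc_def[abs_def] expmom_def using assms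
  by (intro ext set_lebesgue_integral_cong) auto

lemma gmc_borel_measurable_usc:
  fixes X :: "'w \<Rightarrow> 'a::euclidean_space \<Rightarrow> real"
  assumes "prob_space M" "open \<Omega>"
    and "\<And>\<omega>. bdd_above (X \<omega> ` \<Omega>)" "\<And>\<omega>. usc_on \<Omega> (X \<omega>)"
    and "\<And>K t. compact K \<Longrightarrow> K \<subseteq> \<Omega> \<Longrightarrow> {\<omega> \<in> space M. \<forall>x\<in>K. X \<omega> x \<le> t} \<in> sets M"
    and "A \<in> sets borel" "A \<subseteq> \<Omega>"
  shows "gmc M X \<gamma> A \<in> borel_measurable M"
proof -
  obtain Y where Y: "(\<lambda>(\<omega>, x). Y \<omega> x) \<in> borel_measurable (M \<Otimes>\<^sub>M lborel)"
    and agree: "\<And>\<omega> x. x \<in> \<Omega> \<Longrightarrow> Y \<omega> x = X \<omega> x"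
    using usc_field_extends_to_jointly_measurable[OF assms(2-5)] by blast
  have "gmc M Y \<gamma> A = gmc M X \<gamma> A"
    using agree \<open>A \<subseteq> \<Omega>\<close> by (intro gmc_cong \<open>A \<in> sets borel\<close>) auto
  then show ?thesis
    using gmc_borel_measurable[OF prob_space_imp_sigma_finite[OF \<open>prob_space M\<close>] Y \<open>A \<in> sets borel\<close>]
    by metis
qed

lemma exp_ln_inverse_powr_gap:
  fixes e :: real
  assumes "0 < e"
  shows "exp ((\<gamma> - \<gamma>') * (a * ln (1 / e))) * e powr (- \<gamma>'\<^sup>2 / 2) / e powr (- \<gamma>\<^sup>2 / 2)
    = e powr ((\<gamma> - \<gamma>') * ((\<gamma> + \<gamma>') / 2 - a))"
  using assms
  by (simp add: powr_def ln_div flip: exp_add exp_diff) (simp add: field_simps power2_eq_square)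

lemma measure_Sup_below_le_measure_gmc_le:
  fixes X :: "'w \<Rightarrow> 'a::euclidean_space \<Rightarrow> real"
  assumes "prob_space M" "open \<Omega>"
    and bdd: "\<And>\<omega>. bdd_above (X \<omega> ` \<Omega>)" and "\<And>\<omega>. usc_on \<Omega> (X \<omega>)"
    and max_meas: "\<And>K t. compact K \<Longrightarrow> K \<subseteq> \<Omega> \<Longrightarrow> {\<omega> \<in> space M. \<forall>x\<in>K. X \<omega> x \<le> t} \<in> sets M"
    and "compact A" "A \<subseteq> \<Omega>"
    and "\<gamma>' \<le> \<gamma>" "0 < C" "0 < R" "0 < e" "0 < \<eta>"
    and lower: "\<And>x. x \<in> A \<Longrightarrow> 1 / C * e powr (- \<gamma>\<^sup>2 / 2) \<le> expmom M X \<gamma> x"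
    and int: "\<And>x. x \<in> A \<Longrightarrow> integrable M (\<lambda>\<omega>. exp (\<gamma>' * X \<omega> x))"
    and upper: "\<And>x. x \<in> A \<Longrightarrow> expmom M X \<gamma>' x \<le> R * e powr (- \<gamma>'\<^sup>2 / 2)"
  shows "measure M {\<omega> \<in> space M. (SUP x\<in>A. X \<omega> x) \<le> a * ln (1 / e)}
    \<le> measure M {\<omega> \<in> space M. gmc M X \<gamma> A \<omega> \<le> \<eta>}
      + C * R * measure lborel A * e powr ((\<gamma> - \<gamma>') * ((\<gamma> + \<gamma>') / 2 - a)) / \<eta>"
proof -
  interpret prob_space M by fact
  let ?t = "a * ln (1 / e)"
  obtain Y where Y: "(\<lambda>(\<omega>, x). Y \<omega> x) \<in> borel_measurable (M \<Otimes>\<^sub>M lborel)"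
    and agree: "\<And>\<omega> x. x \<in> \<Omega> \<Longrightarrow> Y \<omega> x = X \<omega> x"
    using usc_field_extends_to_jointly_measurable[OF assms(2-5)] by blast
  have agree_A: "Y \<omega> x = X \<omega> x" if "x \<in> A" for \<omega> x
    using agree that \<open>A \<subseteq> \<Omega>\<close> by blast
  have expmom_eq: "expmom M Y g x = expmom M X g x" if "x \<in> A" for g x
    using agree_A[OF that] by (simp add: expmom_def)
  have A_borel: "A \<in> sets borel"
    using \<open>compact A\<close> by (simp add: compact_imp_closed borel_closed)
  have gmc_eq: "gmc M Y \<gamma> A = gmc M X \<gamma> A"
    using agree_A by (rule gmc_cong[OF A_borel])
  have "{\<omega> \<in> space M. (SUP x\<in>A. X \<omega> x) \<le> ?t} \<subseteq> {\<omega> \<in> space M. \<forall>x\<in>A. Y \<omega> x \<le> ?t}"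
  proof safe
    fix \<omega> x assume "(SUP x\<in>A. X \<omega> x) \<le> ?t" "x \<in> A"
    moreover have "bdd_above (X \<omega> ` A)"
      using bdd_above_mono[OF bdd[of \<omega>] image_mono[OF \<open>A \<subseteq> \<Omega>\<close>]] .
    ultimately show "Y \<omega> x \<le> ?t"
      using cSUP_upper[of x A "X \<omega>"] by (simp add: agree_A)
  qed
  moreover have "{\<omega> \<in> space M. \<forall>x\<in>A. Y \<omega> x \<le> ?t} \<in> sets M"
    using max_meas[OF \<open>compact A\<close> \<open>A \<subseteq> \<Omega>\<close>] by (simp add: agree_A)
  ultimately have "measure M {\<omega> \<in> space M. (SUP x\<in>A. X \<omega> x) \<le> ?t}
      \<le> measure M {\<omega> \<in> space M. \<forall>x\<in>A. Y \<omega> x \<le> ?t}"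
    by (rule finite_measure_mono)
  also have "\<dots> \<le> measure M {\<omega> \<in> space M. gmc M Y \<gamma> A \<omega> \<le> \<eta>}
      + exp ((\<gamma> - \<gamma>') * ?t) / (1 / C * e powr (- \<gamma>\<^sup>2 / 2)) * (R * e powr (- \<gamma>'\<^sup>2 / 2))
        * measure lborel A / \<eta>"
  proof (rule measure_field_below_le_measure_gmc_le[OF assms(1) Y A_borel _ \<open>\<gamma>' \<le> \<gamma>\<close> _ _ \<open>0 < \<eta>\<close>])
    show "emeasure lborel A < \<infinity>"
      using emeasure_bounded_finite[OF compact_imp_bounded[OF \<open>compact A\<close>]] by (simp add: top.not_eq_extremum)
    show "0 < 1 / C * e powr (- \<gamma>\<^sup>2 / 2)" "0 \<le> R * e powr (- \<gamma>'\<^sup>2 / 2)"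
      using \<open>0 < C\<close> \<open>0 < R\<close> \<open>0 < e\<close> by auto
  qed (use lower int upper in \<open>simp_all add: expmom_eq agree_A\<close>)
  also have "\<dots> = measure M {\<omega> \<in> space M. gmc M X \<gamma> A \<omega> \<le> \<eta>}
      + C * R * measure lborel A * e powr ((\<gamma> - \<gamma>') * ((\<gamma> + \<gamma>') / 2 - a)) / \<eta>"
  proof -
    have "x / (1 / C * p) * (R * q) * measure lborel A / \<eta> = C * R * measure lborel A * (x * q / p) / \<eta>"
      for x p q :: real
      using \<open>0 < C\<close> by (simp add: field_simps)
    then show ?thesis
      by (simp only: gmc_eq exp_ln_inverse_powr_gap[OF \<open>0 < e\<close>])
  qed
  finally show ?thesis .
qed

lemma cdf_tendsto_0_at_right_0:
  assumes "real_distribution \<nu>" "measure \<nu> {0<..} = 1"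
  shows "(cdf \<nu> \<longlongrightarrow> 0) (at_right 0)"
proof -
  interpret real_distribution \<nu> by fact
  have "cdf \<nu> 0 = 1 - measure \<nu> {0<..}"
    using prob_compl[of "{0<..}"] by (simp add: cdf_def Compl_eq_Diff_UNIV[symmetric] flip: atMost_def)
  then show ?thesis
    using cdf_is_right_cont[of 0] assms(2) by (simp add: continuous_within)
qed

lemma tendsto_0_if_bounded_by_prob_small_value:
  fixes p r :: "nat \<Rightarrow> real" and f :: "nat \<Rightarrow> 'w \<Rightarrow> real"
  assumes "\<And>N. f N \<in> borel_measurable (P N)"
    and conv: "weak_conv_m (\<lambda>N. distr (P N) borel (f N)) \<nu>"
    and "real_distribution \<nu>" "measure \<nu> {0<..} = 1"
    and bound: "\<And>N \<eta>. 0 < \<eta> \<Longrightarrow> p N \<le> measure (P N) {\<omega> \<in> space (P N). f N \<omega> \<le> \<eta>} + r N / \<eta>"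
    and "r \<longlonglongrightarrow> 0" "\<And>N. 0 \<le> p N"
  shows "p \<longlonglongrightarrow> 0"
proof (rule order_tendstoI)
  fix e :: real assume "e < 0"
  then show "\<forall>\<^sub>F N in sequentially. e < p N"
    using \<open>\<And>N. 0 \<le> p N\<close> by (auto intro: always_eventually less_le_trans)
next
  fix e :: real assume "0 < e"
  interpret real_distribution \<nu> by fact
  have "\<forall>\<^sub>F y in at_right 0. cdf \<nu> y < e / 2"
    using cdf_tendsto_0_at_right_0[OF assms(3,4)] \<open>0 < e\<close> by (intro order_tendstoD) auto
  then obtain \<eta>0 where "0 < \<eta>0" and small: "\<And>y. 0 < y \<Longrightarrow> y < \<eta>0 \<Longrightarrow> cdf \<nu> y < e / 2"
    by (auto simp: eventually_at_right_field)
  have "countable {x. \<not> isCont (cdf \<nu>) x}"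
    by (rule mono_ctble_discont) (auto intro: monoI cdf_nondecreasing)
  then obtain \<eta> where \<eta>: "0 < \<eta>" "\<eta> < \<eta>0" "isCont (cdf \<nu>) \<eta>"
    using open_minus_countable[of _ "{0<..<\<eta>0}"] \<open>0 < \<eta>0\<close> by force
  have "(\<lambda>N. cdf (distr (P N) borel (f N)) \<eta>) \<longlonglongrightarrow> cdf \<nu> \<eta>"
    using conv \<eta>(3) unfolding weak_conv_m_def weak_conv_def by blast
  then have "\<forall>\<^sub>F N in sequentially. cdf (distr (P N) borel (f N)) \<eta> < e / 2"
    using small[OF \<eta>(1,2)] by (rule order_tendstoD)
  moreover have "\<forall>\<^sub>F N in sequentially. r N / \<eta> < e / 2"
    using tendsto_divide_zero[OF \<open>r \<longlonglongrightarrow> 0\<close>, of \<eta>] \<open>0 < e\<close> by (intro order_tendstoD) auto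
  ultimately show "\<forall>\<^sub>F N in sequentially. p N < e"
  proof eventually_elim
    case (elim N)
    have "cdf (distr (P N) borel (f N)) \<eta> = measure (P N) {\<omega> \<in> space (P N). f N \<omega> \<le> \<eta>}"
      using assms(1) by (simp add: cdf_def measure_distr vimage_def Int_def conj_commute)
    then show ?case
      using bound[OF \<eta>(1), of N] elim by linarith
  qed
qed

lemma exists_exponents_between:
  fixes a g :: real
  assumes "0 < g" "a < g"
  obtains \<gamma> \<gamma>' where "0 < \<gamma>'" "\<gamma>' < \<gamma>" "\<gamma> < g" "a < (\<gamma> + \<gamma>') / 2"
proof -
  define b where "b = max a 0"
  have "a \<le> b" "0 \<le> b" "b < g" using assms by (auto simp: b_def)
  then show ?thesis
    by (intro that[where \<gamma> = "(b + g) / 2" and \<gamma>' = "(3 * b + g) / 4"]) (auto simp: field_simps)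
qed

theorem theorem3p5:
  fixes \<Omega> :: "'a::euclidean_space set"
    and P :: "nat \<Rightarrow> 'w measure"
    and X :: "'w \<Rightarrow> 'a \<Rightarrow> real"
    and g :: "'a \<Rightarrow> 'a \<Rightarrow> real"
    and \<epsilon> :: "nat \<Rightarrow> real"
    and A :: "'a set" and \<delta> :: real
  assumes Omega: "open \<Omega>" "bounded \<Omega>" "simply_connected \<Omega>" "smooth_boundary \<Omega>"
    and prob: "\<And>N. prob_space (P N)"
    and meas: "\<And>N x. x \<in> \<Omega> \<Longrightarrow> (\<lambda>\<omega>. X \<omega> x) \<in> borel_measurable (P N)"
    and max_meas: "\<And>N K t. compact K \<Longrightarrow> K \<subseteq> \<Omega> \<Longrightarrow>
        {\<omega> \<in> space (P N). \<forall>x\<in>K. X \<omega> x \<le> t} \<in> sets (P N)"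
    and X_int: "\<And>\<omega>. set_integrable lborel \<Omega> (X \<omega>)"
    and X_bdd: "\<And>\<omega>. bdd_above (X \<omega> ` \<Omega>)"
    and X_usc: "\<And>\<omega>. usc_on \<Omega> (X \<omega>)"
    and g_cont: "continuous_on (\<Omega> \<times> \<Omega>) (\<lambda>(x, y). g x y)"
    and g_bdd: "bdd_above ((\<lambda>(x, y). g x y) ` (\<Omega> \<times> \<Omega>))"
    and g_L2: "set_integrable lborel (\<Omega> \<times> \<Omega>) (\<lambda>(x, y). (g x y)\<^sup>2)"
    and conv: "\<And>f. test_function \<Omega> f \<Longrightarrow>
        weak_conv_m (\<lambda>N. distr (P N) borel (\<lambda>\<omega>. LBINT x:\<Omega>. f x * X \<omega> x))
          (gaussian_law (LBINT x:\<Omega>. LBINT y:\<Omega>. f x * f y * (ln (1 / dist x y) + g x y)))"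
    and eps_pos: "\<And>N. \<epsilon> N > 0"
    and eps_lim: "\<epsilon> \<longlonglongrightarrow> 0"
    and E_upper: "\<And>\<gamma>. \<gamma> > 0 \<Longrightarrow> \<exists>R>0. \<forall>N. \<forall>x\<in>\<Omega>.
        integrable (P N) (\<lambda>\<omega>. exp (\<gamma> * X \<omega> x)) \<and>
        expmom (P N) X \<gamma> x \<le> R * \<epsilon> N powr (- \<gamma>\<^sup>2 / 2)"
    and E_lower: "\<And>\<gamma> K. \<gamma> > 0 \<Longrightarrow> compact K \<Longrightarrow> K \<subseteq> \<Omega> \<Longrightarrow> \<exists>C>0. \<forall>N. \<forall>x\<in>K.
        expmom (P N) X \<gamma> x \<ge> (1 / C) * \<epsilon> N powr (- \<gamma>\<^sup>2 / 2)"
    and M: "\<And>\<gamma> B. 0 < \<gamma> \<Longrightarrow> \<gamma> < gamma_star TYPE('a) \<Longrightarrow> B \<in> sets borel \<Longrightarrow>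
        B \<subseteq> \<Omega> \<Longrightarrow> measure lborel B > 0 \<Longrightarrow>
        \<exists>\<nu>. real_distribution \<nu> \<and> weak_conv_m (\<lambda>N. distr (P N) borel (gmc (P N) X \<gamma> B)) \<nu>
            \<and> measure \<nu> {0<..} = 1"
    and A: "compact A" "A \<subseteq> \<Omega>" "measure lborel A > 0"
    and delta: "\<delta> > 0"
  shows "(\<lambda>N. measure (P N) {\<omega> \<in> space (P N).
            (SUP x\<in>A. X \<omega> x) \<le> (gamma_star TYPE('a) - \<delta>) * ln (1 / \<epsilon> N)}) \<longlonglongrightarrow> 0"
proof -
  let ?a = "gamma_star TYPE('a) - \<delta>"
  have "0 < gamma_star TYPE('a)" "?a < gamma_star TYPE('a)"
    using delta by (auto simp: gamma_star_def)
  then obtain \<gamma> \<gamma>' where \<gamma>: "0 < \<gamma>'" "\<gamma>' < \<gamma>" "\<gamma> < gamma_star TYPE('a)" "?a < (\<gamma> + \<gamma>') / 2"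
    by (rule exists_exponents_between)
  define \<kappa> where "\<kappa> = (\<gamma> - \<gamma>') * ((\<gamma> + \<gamma>') / 2 - ?a)"
  have "0 < \<kappa>" using \<gamma> by (simp add: \<kappa>_def)
  have A_borel: "A \<in> sets borel" using A(1) by (simp add: compact_imp_closed borel_closed)
  obtain C where "0 < C" and C: "\<And>N x. x \<in> A \<Longrightarrow> 1 / C * \<epsilon> N powr (- \<gamma>\<^sup>2 / 2) \<le> expmom (P N) X \<gamma> x"
    using E_lower[of \<gamma> A] \<gamma> A by auto
  obtain R where "0 < R" and R: "\<And>N x. x \<in> \<Omega> \<Longrightarrow> integrable (P N) (\<lambda>\<omega>. exp (\<gamma>' * X \<omega> x)) \<and>
      expmom (P N) X \<gamma>' x \<le> R * \<epsilon> N powr (- \<gamma>'\<^sup>2 / 2)"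
    using E_upper[of \<gamma>'] \<gamma> by auto
  obtain \<nu> where \<nu>: "real_distribution \<nu>" "weak_conv_m (\<lambda>N. distr (P N) borel (gmc (P N) X \<gamma> A)) \<nu>"
      "measure \<nu> {0<..} = 1"
    using M[of \<gamma> A] \<gamma> A_borel A by auto
  show ?thesis
  proof (rule tendsto_0_if_bounded_by_prob_small_value[OF _ \<nu>(2,1,3),
        where r = "\<lambda>N. C * R * measure lborel A * \<epsilon> N powr \<kappa>"])
    show "gmc (P N) X \<gamma> A \<in> borel_measurable (P N)" for N
      by (rule gmc_borel_measurable_usc[OF prob Omega(1) X_bdd X_usc max_meas A_borel A(2)])
    show "measure (P N) {\<omega> \<in> space (P N). (SUP x\<in>A. X \<omega> x) \<le> ?a * ln (1 / \<epsilon> N)}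
        \<le> measure (P N) {\<omega> \<in> space (P N). gmc (P N) X \<gamma> A \<omega> \<le> \<eta>}
          + C * R * measure lborel A * \<epsilon> N powr \<kappa> / \<eta>" if "0 < \<eta>" for N \<eta>
      unfolding \<kappa>_def using A(2) \<gamma>(2) \<open>0 < C\<close> \<open>0 < R\<close> eps_pos that C R
      by (intro measure_Sup_below_le_measure_gmc_le[OF prob Omega(1) X_bdd X_usc max_meas A(1,2)]) auto
    show "(\<lambda>N. C * R * measure lborel A * \<epsilon> N powr \<kappa>) \<longlonglongrightarrow> 0"
      using eps_lim eps_pos \<open>0 < \<kappa>\<close>
      by (intro tendsto_mult_right_zero tendsto_zero_powrI) (auto intro: always_eventually less_imp_le)
  qed auto
qed

end
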